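(* Let $\Theta$ be a well-formed System $\mathsf{F_\wedge}$ context, $S,S'$ types over $\Theta$ and $T,T'$ types over $\Theta, X<:\top$. If $\Theta \vdash S' <: S$ and $\Theta, X <: \top \vdash T <: T'$, then $\Theta \vdash \forall X.\,T[X\wedge S/X^-] <: \forall X.\,T'[X \wedge S'/X^-]$.
   Context: System $\mathsf{F_\wedge}$: raw types $T ::= \top \mid X \mid T \to T \mid \forall X.T \mid T \wedge T$, identified up to $\alpha$-conversion. Contexts are finite sequences of assumptions $X<:T$ or $x:T$ with distinct variables, each type well-formed over the preceding part. Subtyping $\Theta \vdash S <: T$ is generated by: (Var) $\Theta, X<:T,\Theta' \vdash X <: T$; (Top) $T <: \top$; (Refl); (Trans); ($\to$) from $S'<:S$ and $T<:T'$ infer $S\to T <: S' \to T'$; ($\forall$) from $\Theta, X<:\top \vdash S <: T$ infer $\Theta \vdash \forall X.S <: \forall X.T$; (meet) $S\wedge S' <: S$, $S \wedge S' <: S'$, and from $T<:S$, $T<:S'$ infer $T <: S\wedge S'$. Mixed substitution $T[(S_-,S_+)/X]$: $X[(S_-,S_+)/X] = S_+$; $Y[(S_-,S_+)/X] = Y$ for $Y \not\equiv X$; $\top \mapsto \top$; $(T\to T')[(S_-,S_+)/X] = T[(S_+,S_-)/X] \to T'[(S_-,S_+)/X]$; $(\forall Y.T)[(S_-,S_+)/X] = \forall Y.T[(S_-,S_+)/X]$; $(T\wedge T')[(S_-,S_+)/X] = T[(S_-,S_+)/X] \wedge T'[(S_-,S_+)/X]$ (bound variables renamed to avoid capture). $T[U/X^-]$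 abbreviates $T[(U,X)/X]$, i.e. only negative occurrences of $X$ are replaced by $U$. *)

theory Defs
  imports Main
begin

text \<open>System F-meet with locally nameless de Bruijn indices (types up to alpha-conversion).
  Index 0 refers to the most recent binding of the context.\<close>

datatype ty = Top | TVar nat | Arr ty ty | All ty | Meet ty ty

text \<open>Context bindings: type variable bound X <: T, or term variable x : T.
  Contexts are lists with the most recent binding at the head; de Bruijn indices count
  all bindings (term and type).\<close>
datatype binding = TyB ty | VarB ty

fun bty :: "binding \<Rightarrow> ty" where
  "bty (TyB T) = T"
| "bty (VarB T) = T"

fun liftT :: "nat \<Rightarrow> nat \<Rightarrow> ty \<Rightarrow> ty" where
  "liftT n k Top = Top"
| "liftT n k (TVar i) = (if i < k then TVar i else TVar (i + n))"
| "liftT n k (Arr A B) = Arr (liftT n k A) (liftT n k B)"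
| "liftT n k (All A) = All (liftT n (Suc k) A)"
| "liftT n k (Meet A B) = Meet (liftT n k A) (liftT n k B)"

fun wfT :: "binding list \<Rightarrow> ty \<Rightarrow> bool" where
  "wfT \<Gamma> Top = True"
| "wfT \<Gamma> (TVar i) = (i < length \<Gamma> \<and> (\<exists>U. \<Gamma> ! i = TyB U))"
| "wfT \<Gamma> (Arr A B) = (wfT \<Gamma> A \<and> wfT \<Gamma> B)"
| "wfT \<Gamma> (All A) = wfT (TyB Top # \<Gamma>) A"
| "wfT \<Gamma> (Meet A B) = (wfT \<Gamma> A \<and> wfT \<Gamma> B)"

fun wfE :: "binding list \<Rightarrow> bool" where
  "wfE [] = True"
| "wfE (B # \<Gamma>) = (wfE \<Gamma> \<and> wfT \<Gamma> (bty B))"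

inductive sub :: "binding list \<Rightarrow> ty \<Rightarrow> ty \<Rightarrow> bool" where
  SVar: "i < length \<Gamma> \<Longrightarrow> \<Gamma> ! i = TyB U \<Longrightarrow> sub \<Gamma> (TVar i) (liftT (Suc i) 0 U)"
| STop: "sub \<Gamma> T Top"
| SRefl: "sub \<Gamma> T T"
| STrans: "sub \<Gamma> S U \<Longrightarrow> sub \<Gamma> U T \<Longrightarrow> sub \<Gamma> S T"
| SArr: "sub \<Gamma> S' S \<Longrightarrow> sub \<Gamma> T T' \<Longrightarrow> sub \<Gamma> (Arr S T) (Arr S' T')"
| SAll: "sub (TyB Top # \<Gamma>) S T \<Longrightarrow> sub \<Gamma> (All S) (All T)"
| SMeet1: "sub \<Gamma> (Meet S S') S"
| SMeet2: "sub \<Gamma> (Meet S S') S'"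
| SMeet3: "sub \<Gamma> T S \<Longrightarrow> sub \<Gamma> T S' \<Longrightarrow> sub \<Gamma> T (Meet S S')"

text \<open>Mixed substitution T[(Sm,Sp)/X] where X is index k; Sm, Sp live in the same scope
  as T (they may mention X itself). The variable X is not removed (no index decrement),
  matching the named definition in which other variables are left unchanged.\<close>
fun msub :: "nat \<Rightarrow> ty \<Rightarrow> ty \<Rightarrow> ty \<Rightarrow> ty" where
  "msub k Sm Sp Top = Top"
| "msub k Sm Sp (TVar i) = (if i = k then Sp else TVar i)"
| "msub k Sm Sp (Arr A B) = Arr (msub k Sp Sm A) (msub k Sm Sp B)"
| "msub k Sm Sp (All A) = All (msub (Suc k) (liftT 1 0 Sm) (liftT 1 0 Sp) A)"
| "msub k Sm Sp (Meet A B) = Meet (msub k Sm Sp A) (msub k Sm Sp B)"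

text \<open>T[U/X^-] for X = index 0: only negative occurrences replaced.\<close>
definition negsub0 :: "ty \<Rightarrow> ty \<Rightarrow> ty" where
  "negsub0 T U = msub 0 U (TVar 0) T"

end

theory Submission
  imports Defs
begin

text \<open>Since X is bounded by Top, every use of the variable rule for X becomes an instance of
  the Top rule after substituting for X, so substitution for X preserves subtyping derivations:
  T <: T' gives T[X\<and>S/X^-] <: T'[X\<and>S/X^-]. A mixed substitution is moreover antitone in what
  replaces the negative occurrences, and S' <: S gives X\<and>S' <: X\<and>S, whence
  T'[X\<and>S/X^-] <: T'[X\<and>S'/X^-]. Transitivity and the rule for \<forall> conclude.\<close>

lemma liftT_liftT_comm:
  "k \<le> j \<Longrightarrow> liftT 1 (j + n) (liftT n k U) = liftT n k (liftT 1 j U)"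
proof (induction U arbitrary: k j)
  case (All U)
  then show ?case using All.IH[of "Suc k" "Suc j"] by simp
qed auto

lemma liftT_liftT_merge:
  "k \<le> j \<Longrightarrow> j \<le> k + n \<Longrightarrow> liftT m j (liftT n k U) = liftT (m + n) k U"
  by (induction U arbitrary: k j) auto

lemma msub_liftT_skip:
  "j \<le> k \<Longrightarrow> k < j + n \<Longrightarrow> msub k Sm Sp (liftT n j U) = liftT n j U"
  by (induction U arbitrary: k j Sm Sp) auto

lemma sub_Meet_mono:
  "sub \<Gamma> A A' \<Longrightarrow> sub \<Gamma> B B' \<Longrightarrow> sub \<Gamma> (Meet A B) (Meet A' B')"
  by (meson sub.SMeet1 sub.SMeet2 sub.SMeet3 sub.STrans)

fun map_binding :: "(ty \<Rightarrow> ty) \<Rightarrow> binding \<Rightarrow> binding" where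
  "map_binding f (TyB T) = TyB (f T)"
| "map_binding f (VarB T) = VarB (f T)"

text \<open>\<open>\<Gamma>'\<close> is \<open>\<Gamma>\<close> with one binding inserted at position \<open>j\<close>; the \<open>j\<close> bindings in front of
  it are shifted so that they still refer to the same variables.\<close>

definition ctx_insert_at :: "nat \<Rightarrow> binding list \<Rightarrow> binding list \<Rightarrow> bool" where
  "ctx_insert_at j \<Gamma> \<Gamma>' \<longleftrightarrow> length \<Gamma>' = Suc (length \<Gamma>) \<and> j \<le> length \<Gamma> \<and>
     (\<forall>i<j. \<Gamma>' ! i = map_binding (liftT 1 (j - Suc i)) (\<Gamma> ! i)) \<and>
     (\<forall>i. j \<le> i \<longrightarrow> i < length \<Gamma> \<longrightarrow> \<Gamma>' ! Suc i = \<Gamma> ! i)"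

lemma ctx_insert_at_Cons:
  "ctx_insert_at j \<Gamma> \<Gamma>' \<Longrightarrow> ctx_insert_at (Suc j) (b # \<Gamma>) (map_binding (liftT 1 j) b # \<Gamma>')"
  unfolding ctx_insert_at_def by (auto simp: nth_Cons split: nat.splits)

lemma sub_weaken:
  "sub \<Gamma> A B \<Longrightarrow> ctx_insert_at j \<Gamma> \<Gamma>' \<Longrightarrow> sub \<Gamma>' (liftT 1 j A) (liftT 1 j B)"
proof (induction arbitrary: j \<Gamma>' rule: sub.induct)
  case (SVar i \<Gamma> U)
  show ?case
  proof (cases "i < j")
    case True
    then have "\<Gamma>' ! i = TyB (liftT 1 (j - Suc i) U)" "i < length \<Gamma>'"
      using SVar unfolding ctx_insert_at_def by auto
    moreover have "liftT 1 j (liftT (Suc i) 0 U) = liftT (Suc i) 0 (liftT 1 (j - Suc i) U)"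
      using liftT_liftT_comm[of 0 "j - Suc i" "Suc i" U] True by simp
    ultimately show ?thesis using True sub.SVar by simp
  next
    case False
    then have "\<Gamma>' ! Suc i = TyB U" "Suc i < length \<Gamma>'"
      using SVar unfolding ctx_insert_at_def by auto
    moreover have "liftT 1 j (liftT (Suc i) 0 U) = liftT (Suc (Suc i)) 0 U"
      using liftT_liftT_merge[of 0 j "Suc i" 1 U] False by simp
    ultimately show ?thesis using False sub.SVar by fastforce
  qed
next
  case STrans
  then show ?case by (meson sub.STrans)
next
  case (SAll \<Gamma> S T)
  then show ?case using ctx_insert_at_Cons[of j \<Gamma> \<Gamma>' "TyB Top"] by (simp add: sub.SAll)
qed (auto intro: sub.intros)

lemma sub_weaken_Cons: "sub \<Gamma> A B \<Longrightarrow> sub (b # \<Gamma>) (liftT 1 0 A) (liftT 1 0 B)"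
  by (erule sub_weaken) (simp add: ctx_insert_at_def)

definition top_bounded_upto :: "binding list \<Rightarrow> nat \<Rightarrow> bool" where
  "top_bounded_upto \<Gamma> k \<longleftrightarrow> (\<forall>i U. i \<le> k \<longrightarrow> i < length \<Gamma> \<longrightarrow> \<Gamma> ! i = TyB U \<longrightarrow> U = Top)"

text \<open>All variables up to \<open>k\<close>, not just \<open>k\<close>, must be bounded by Top: the lifted bound of a
  variable below \<open>k\<close> may mention \<open>k\<close>, and would be changed by the substitution.\<close>

lemma sub_msub_top_bounded:
  "sub \<Gamma> T T' \<Longrightarrow> top_bounded_upto \<Gamma> k \<Longrightarrow> sub \<Gamma> (msub k Sm Sp T) (msub k Sm Sp T')"
proof (induction arbitrary: k Sm Sp rule: sub.induct)
  case (SVar i \<Gamma> U)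
  show ?case
  proof (cases "i \<le> k")
    case True
    then have "U = Top" using SVar unfolding top_bounded_upto_def by blast
    then show ?thesis by (simp add: sub.STop)
  next
    case False
    then show ?thesis using msub_liftT_skip[of 0 k "Suc i"] sub.SVar[OF SVar.hyps] by simp
  qed
next
  case STrans
  then show ?case by (meson sub.STrans)
next
  case (SAll \<Gamma> S T)
  have "top_bounded_upto (TyB Top # \<Gamma>) (Suc k)"
    using SAll.prems unfolding top_bounded_upto_def by (auto simp: nth_Cons split: nat.splits)
  then show ?case using SAll.IH by (simp add: sub.SAll)
qed (auto intro: sub.intros)

lemma sub_msub_mono:
  "sub \<Gamma> Sm' Sm \<Longrightarrow> sub \<Gamma> Sp Sp' \<Longrightarrow> sub \<Gamma> (msub k Sm Sp T) (msub k Sm' Sp' T)"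
proof (induction T arbitrary: \<Gamma> k Sm Sp Sm' Sp')
  case (All T)
  then show ?case
    using All.IH[OF sub_weaken_Cons sub_weaken_Cons, OF All.prems] by (simp add: sub.SAll)
qed (auto intro: sub.intros sub_Meet_mono)

theorem lemma3p7:
  assumes "wfE \<Theta>"
    and "wfT \<Theta> S" and "wfT \<Theta> S'"
    and "wfT (TyB Top # \<Theta>) T" and "wfT (TyB Top # \<Theta>) T'"
    and "sub \<Theta> S' S"
    and "sub (TyB Top # \<Theta>) T T'"
  shows "sub \<Theta> (All (negsub0 T (Meet (TVar 0) (liftT 1 0 S))))
                 (All (negsub0 T' (Meet (TVar 0) (liftT 1 0 S'))))"
proof -
  let ?\<Theta>X = "TyB Top # \<Theta>"
  have "top_bounded_upto ?\<Theta>X 0"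
    unfolding top_bounded_upto_def by auto
  then have "sub ?\<Theta>X (negsub0 T (Meet (TVar 0) (liftT 1 0 S)))
                     (negsub0 T' (Meet (TVar 0) (liftT 1 0 S)))"
    unfolding negsub0_def using sub_msub_top_bounded assms(7) by blast
  moreover have "sub ?\<Theta>X (Meet (TVar 0) (liftT 1 0 S')) (Meet (TVar 0) (liftT 1 0 S))"
    using sub_Meet_mono sub.SRefl sub_weaken_Cons assms(6) by blast
  then have "sub ?\<Theta>X (negsub0 T' (Meet (TVar 0) (liftT 1 0 S)))
                     (negsub0 T' (Meet (TVar 0) (liftT 1 0 S')))"
    unfolding negsub0_def using sub_msub_mono sub.SRefl by blast
  ultimately show ?thesis by (meson sub.SAll sub.STrans)
qed

end
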